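(* Let $\mathfrak m,\mathfrak m^*$ be complex-valued functions on the edges of the lattice strip and let $\phi=\int_{\gamma_0}\big(\mathfrak m(z)\psi(z)\,dz+\mathfrak m^*(z)\psi^*(z)\,d\bar z\big)$. Then its Hilbert space adjoint is $$\phi^\dagger=\int_{\gamma_0}\big(-\overline{\mathfrak m(z)}\,\psi(z)\,dz+\overline{\mathfrak m^*(z)}\,\psi^*(z)\,d\bar z\big).$$
   Context: Fix integers $a<0<b$, $C=\{a,\dots,b\}$, $C^*=\{a+\frac12,\dots,b-\frac12\}$. $\tilde V$ is the complex inner product space with orthonormal basis $(e_\rho)_{\rho\in\{\pm1\}^C}$, and $\dagger$ is the Hilbert space adjoint. For $x'\in C^*$, $\varsigma_{x'}(\rho)$ flips the signs of $\rho_x$ for $x<x'$; $\psi_{x'}e_\rho=\frac{-\rho_{x'-1/2}+i\rho_{x'+1/2}}{\sqrt2}e_{\varsigma_{x'}(\rho)}$, $\psi^*_{x'}e_\rho=\frac{-i\rho_{x'-1/2}+\rho_{x'+1/2}}{\sqrt2}e_{\varsigma_{x'}(\rho)}$. The lattice strip has vertices $C\times\mathbb Z\subset\mathbb C$ and nearest-neighbour edges identified with their midpoints; on the horizontal edges $x'\in C^*$ at height $0$ the fermions are $\psi(x')=\psi_{x'}$, $\psi^*(x')=\psi^*_{x'}$. The contour $\gamma_0=(a,a+1,\dots,b)$ crosses the strip at height $0$, and for a contour $(w_0,\dots,w_m)$ with $z_j$ the edge joining $w_{j-1},w_j$, $\int(\mathfrak m\psi\,dz+\mathfrak m^*\psi^*\,d\bar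 z)=\sum_j(\mathfrak m(z_j)\psi(z_j)(w_j-w_{j-1})+\mathfrak m^*(z_j)\psi^*(z_j)\overline{(w_j-w_{j-1})})$. *)

theory Defs
  imports "HOL-Analysis.Analysis"
begin

text \<open>Spin configurations \<rho> \<in> {+-1}^C with C = {a..b}, represented as functions
  int \<Rightarrow> int that take values in {-1,1} on C and are normalised to 1 outside C.\<close>
definition configs :: "int \<Rightarrow> int \<Rightarrow> (int \<Rightarrow> int) set" where
  "configs a b = {\<rho>. (\<forall>x\<in>{a..b}. \<rho> x \<in> {-1, 1}) \<and> (\<forall>x. x \<notin> {a..b} \<longrightarrow> \<rho> x = 1)}"

text \<open>Vectors of V~: coordinates w.r.t. the orthonormal basis (e_\<rho>); only values on
  configs a b matter.  Operators are maps vec \<Rightarrow> vec.\<close>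
type_synonym vec = "(int \<Rightarrow> int) \<Rightarrow> complex"
type_synonym op = "vec \<Rightarrow> vec"

definition basis_vec :: "(int \<Rightarrow> int) \<Rightarrow> vec" where
  "basis_vec \<rho> = (\<lambda>\<sigma>. if \<sigma> = \<rho> then 1 else 0)"

definition vinner :: "int \<Rightarrow> int \<Rightarrow> vec \<Rightarrow> vec \<Rightarrow> complex" where
  "vinner a b u v = (\<Sum>\<rho>\<in>configs a b. cnj (u \<rho>) * v \<rho>)"

text \<open>Half-integer points x' \<in> C* are written x' = k + 1/2 with k \<in> {a..b-1}.
  flip k = \<sigma>_{k+1/2}: flips the signs \<rho>_x for x < k + 1/2, i.e. x \<le> k (within C).\<close>
definition flip :: "int \<Rightarrow> int \<Rightarrow> (int \<Rightarrow> int) \<Rightarrow> (int \<Rightarrow> int)" where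
  "flip a k \<rho> = (\<lambda>x. if a \<le> x \<and> x \<le> k then - \<rho> x else \<rho> x)"

definition psi_e :: "int \<Rightarrow> int \<Rightarrow> (int \<Rightarrow> int) \<Rightarrow> vec" where
  "psi_e a k \<rho> = (\<lambda>\<sigma>. ((- of_int (\<rho> k) + \<i> * of_int (\<rho> (k+1))) / complex_of_real (sqrt 2))
                      * basis_vec (flip a k \<rho>) \<sigma>)"

definition psis_e :: "int \<Rightarrow> int \<Rightarrow> (int \<Rightarrow> int) \<Rightarrow> vec" where
  "psis_e a k \<rho> = (\<lambda>\<sigma>. ((- \<i> * of_int (\<rho> k) + of_int (\<rho> (k+1))) / complex_of_real (sqrt 2))
                      * basis_vec (flip a k \<rho>) \<sigma>)"

definition psi :: "int \<Rightarrow> int \<Rightarrow> int \<Rightarrow> op" where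
  "psi a b k v = (\<lambda>\<sigma>. \<Sum>\<rho>\<in>configs a b. v \<rho> * psi_e a k \<rho> \<sigma>)"

definition psis :: "int \<Rightarrow> int \<Rightarrow> int \<Rightarrow> op" where
  "psis a b k v = (\<lambda>\<sigma>. \<Sum>\<rho>\<in>configs a b. v \<rho> * psis_e a k \<rho> \<sigma>)"

text \<open>Fermions on the horizontal edges at height 0: the edge with midpoint x' \<in> C*
  (a complex number with real part k + 1/2) carries \<psi>_{x'} and \<psi>*_{x'}.\<close>
definition psi_field :: "int \<Rightarrow> int \<Rightarrow> complex \<Rightarrow> op" where
  "psi_field a b z = psi a b \<lfloor>Re z\<rfloor>"

definition psis_field :: "int \<Rightarrow> int \<Rightarrow> complex \<Rightarrow> op" where
  "psis_field a b z = psis a b \<lfloor>Re z\<rfloor>"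

definition op_scale :: "complex \<Rightarrow> op \<Rightarrow> op" where
  "op_scale c T = (\<lambda>v \<sigma>. c * T v \<sigma>)"

text \<open>Discrete contour integral along a contour (w_0,...,w_m) given as a list of
  vertices; z_j = (w_{j-1}+w_j)/2 is the edge joining w_{j-1} and w_j.\<close>
definition contour_int ::
  "int \<Rightarrow> int \<Rightarrow> (complex \<Rightarrow> complex) \<Rightarrow> (complex \<Rightarrow> complex) \<Rightarrow> complex list \<Rightarrow> op" where
  "contour_int a b mm ms ws = (\<lambda>v \<sigma>.
     (\<Sum>j\<in>{1..<length ws}.
        let z = (ws ! (j-1) + ws ! j) / 2; d = ws ! j - ws ! (j-1) in
        op_scale (mm z * d) (psi_field a b z) v \<sigma>
        + op_scale (ms z * cnj d) (psis_field a b z) v \<sigma>))"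

definition gamma0 :: "int \<Rightarrow> int \<Rightarrow> complex list" where
  "gamma0 a b = map of_int [a..b]"

end

theory Submission
  imports Defs
begin

text \<open>Both \<psi> and \<psi>* at x' map e(\<rho>) to c(\<rho>) e(\<sigma> \<rho>) for the involution \<sigma> = flip at x',
  so their adjoints map e(\<rho>) to cnj (c(\<sigma> \<rho>)) e(\<sigma> \<rho>).  The involution negates \<rho>(x' - 1/2) but not
  \<rho>(x' + 1/2), which turns the conjugated coefficient into -c(\<rho>) for \<psi> and into c(\<rho>) for \<psi>*:
  \<psi> is skew-adjoint and \<psi>* is self-adjoint.  Along \<gamma>0 every increment dz is the real number 1, so
  taking the conjugate-linear adjoint termwise only conjugates the coefficients m and m*.\<close>

definition psi_coeff :: "int \<Rightarrow> (int \<Rightarrow> int) \<Rightarrow> complex" where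
  "psi_coeff k \<rho> = (- of_int (\<rho> k) + \<i> * of_int (\<rho> (k+1))) / complex_of_real (sqrt 2)"

definition psis_coeff :: "int \<Rightarrow> (int \<Rightarrow> int) \<Rightarrow> complex" where
  "psis_coeff k \<rho> = (- \<i> * of_int (\<rho> k) + of_int (\<rho> (k+1))) / complex_of_real (sqrt 2)"

lemma finite_configs: "finite (configs a b)"
proof (rule finite_subset)
  let ?extend = "\<lambda>f x. if x \<in> {a..b} then f x else 1"
  show "configs a b \<subseteq> ?extend ` ({a..b} \<rightarrow>\<^sub>E {-1, 1})"
  proof
    fix \<rho> assume "\<rho> \<in> configs a b"
    then have "\<rho> = ?extend (restrict \<rho> {a..b})" and "restrict \<rho> {a..b} \<in> {a..b} \<rightarrow>\<^sub>E {-1, 1}"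
      by (auto simp: configs_def)
    then show "\<rho> \<in> ?extend ` ({a..b} \<rightarrow>\<^sub>E {-1, 1})"
      by blast
  qed
  show "finite (?extend ` ({a..b} \<rightarrow>\<^sub>E {-1, 1::int}))"
    by (intro finite_imageI finite_PiE) auto
qed

lemma flip_flip [simp]: "flip a k (flip a k \<rho>) = \<rho>"
  by (auto simp: flip_def)

lemma flip_in_configs: "k \<le> b \<Longrightarrow> \<rho> \<in> configs a b \<Longrightarrow> flip a k \<rho> \<in> configs a b"
  by (auto simp: flip_def configs_def)

lemma bij_betw_flip: "k \<le> b \<Longrightarrow> bij_betw (flip a k) (configs a b) (configs a b)"
  by (rule bij_betwI[where g = "flip a k"]) (auto simp: flip_in_configs)

lemma sum_basis_vec_flip:
  assumes "k \<le> b" and "\<sigma> \<in> configs a b"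
  shows "(\<Sum>\<rho>\<in>configs a b. v \<rho> * (c \<rho> * basis_vec (flip a k \<rho>) \<sigma>))
         = v (flip a k \<sigma>) * c (flip a k \<sigma>)"
proof -
  have "(\<Sum>\<rho>\<in>configs a b. v \<rho> * (c \<rho> * basis_vec (flip a k \<rho>) \<sigma>))
        = (\<Sum>\<rho>\<in>configs a b. if \<rho> = flip a k \<sigma> then v \<rho> * c \<rho> else 0)"
    by (rule sum.cong) (auto simp: basis_vec_def)
  then show ?thesis
    using flip_in_configs[OF assms] finite_configs by simp
qed

lemma psi_apply:
  "k \<le> b \<Longrightarrow> \<sigma> \<in> configs a b \<Longrightarrow> psi a b k v \<sigma> = v (flip a k \<sigma>) * psi_coeff k (flip a k \<sigma>)"
  unfolding psi_def psi_e_def psi_coeff_def[symmetric] by (rule sum_basis_vec_flip)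

lemma psis_apply:
  "k \<le> b \<Longrightarrow> \<sigma> \<in> configs a b \<Longrightarrow> psis a b k v \<sigma> = v (flip a k \<sigma>) * psis_coeff k (flip a k \<sigma>)"
  unfolding psis_def psis_e_def psis_coeff_def[symmetric] by (rule sum_basis_vec_flip)

lemma cnj_psi_coeff: "a \<le> k \<Longrightarrow> cnj (psi_coeff k \<rho>) = - psi_coeff k (flip a k \<rho>)"
  by (simp add: psi_coeff_def flip_def complex_eq_iff)

lemma cnj_psis_coeff: "a \<le> k \<Longrightarrow> cnj (psis_coeff k \<rho>) = psis_coeff k (flip a k \<rho>)"
  by (simp add: psis_coeff_def flip_def complex_eq_iff)

lemma vinner_cong:
  "(\<And>\<sigma>. \<sigma> \<in> configs a b \<Longrightarrow> u \<sigma> = u' \<sigma>) \<Longrightarrow> (\<And>\<sigma>. \<sigma> \<in> configs a b \<Longrightarrow> v \<sigma> = v' \<sigma>)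
   \<Longrightarrow> vinner a b u v = vinner a b u' v'"
  unfolding vinner_def by (rule sum.cong) auto

lemma vinner_sum_left: "vinner a b (\<lambda>\<sigma>. \<Sum>j\<in>J. f j \<sigma>) v = (\<Sum>j\<in>J. vinner a b (f j) v)"
  unfolding vinner_def by (simp add: sum_distrib_right sum.swap[of _ J])

lemma vinner_sum_right: "vinner a b u (\<lambda>\<sigma>. \<Sum>j\<in>J. f j \<sigma>) = (\<Sum>j\<in>J. vinner a b u (f j))"
  unfolding vinner_def by (simp add: sum_distrib_left sum.swap[of _ J])

lemma vinner_add_left: "vinner a b (\<lambda>\<sigma>. f \<sigma> + g \<sigma>) v = vinner a b f v + vinner a b g v"
  unfolding vinner_def by (simp add: distrib_right sum.distrib)

lemma vinner_diff_right: "vinner a b u (\<lambda>\<sigma>. f \<sigma> - g \<sigma>) = vinner a b u f - vinner a b u g"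
  unfolding vinner_def by (simp add: right_diff_distrib sum_subtractf)

lemma vinner_uminus_right: "vinner a b u (\<lambda>\<sigma>. - f \<sigma>) = - vinner a b u f"
  unfolding vinner_def by (simp add: sum_negf)

lemma vinner_scale_left: "vinner a b (\<lambda>\<sigma>. c * f \<sigma>) v = cnj c * vinner a b f v"
  unfolding vinner_def by (simp add: sum_distrib_left algebra_simps)

lemma vinner_scale_right: "vinner a b u (\<lambda>\<sigma>. c * f \<sigma>) = c * vinner a b u f"
  unfolding vinner_def by (simp add: sum_distrib_left algebra_simps)

lemma vinner_weighted_flip:
  assumes "k \<le> b"
  shows "vinner a b (\<lambda>\<sigma>. u (flip a k \<sigma>) * c (flip a k \<sigma>)) v
         = vinner a b u (\<lambda>\<sigma>. v (flip a k \<sigma>) * cnj (c \<sigma>))"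
proof -
  have "vinner a b (\<lambda>\<sigma>. u (flip a k \<sigma>) * c (flip a k \<sigma>)) v
        = (\<Sum>\<sigma>\<in>configs a b. (\<lambda>\<rho>. cnj (u \<rho> * c \<rho>) * v (flip a k \<rho>)) (flip a k \<sigma>))"
    unfolding vinner_def by simp
  also have "\<dots> = (\<Sum>\<rho>\<in>configs a b. cnj (u \<rho> * c \<rho>) * v (flip a k \<rho>))"
    using sum.reindex_bij_betw[OF bij_betw_flip[OF assms]] .
  finally show ?thesis
    unfolding vinner_def by (simp add: algebra_simps)
qed

lemma psi_skew_adjoint:
  assumes "a \<le> k" and "k \<le> b"
  shows "vinner a b (psi a b k u) v = - vinner a b u (psi a b k v)"
proof -
  have "vinner a b (psi a b k u) v
        = vinner a b u (\<lambda>\<sigma>. v (flip a k \<sigma>) * cnj (psi_coeff k \<sigma>))"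
    by (subst vinner_weighted_flip[OF assms(2), symmetric])
      (rule vinner_cong, simp_all add: psi_apply[OF assms(2)])
  also have "\<dots> = vinner a b u (\<lambda>\<sigma>. - psi a b k v \<sigma>)"
    by (rule vinner_cong) (simp_all add: psi_apply[OF assms(2)] cnj_psi_coeff[OF assms(1)])
  finally show ?thesis
    by (simp add: vinner_uminus_right)
qed

lemma psis_self_adjoint:
  assumes "a \<le> k" and "k \<le> b"
  shows "vinner a b (psis a b k u) v = vinner a b u (psis a b k v)"
proof -
  have "vinner a b (psis a b k u) v
        = vinner a b u (\<lambda>\<sigma>. v (flip a k \<sigma>) * cnj (psis_coeff k \<sigma>))"
    by (subst vinner_weighted_flip[OF assms(2), symmetric])
      (rule vinner_cong, simp_all add: psis_apply[OF assms(2)])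
  also have "\<dots> = vinner a b u (psis a b k v)"
    by (rule vinner_cong) (simp_all add: psis_apply[OF assms(2)] cnj_psis_coeff[OF assms(1)])
  finally show ?thesis .
qed

lemma gamma0_edge:
  assumes "j \<in> {1..<length (gamma0 a b)}"
  obtains k where "a \<le> k" and "k \<le> b"
    and "gamma0 a b ! j - gamma0 a b ! (j - 1) = 1"
    and "\<lfloor>Re ((gamma0 a b ! (j - 1) + gamma0 a b ! j) / 2)\<rfloor> = k"
proof
  let ?k = "a + int j - 1"
  have "gamma0 a b ! (j - 1) = of_int ?k" and "gamma0 a b ! j = of_int (?k + 1)"
    using assms by (auto simp: gamma0_def of_nat_diff)
  moreover have "\<lfloor>Re ((of_int ?k + of_int (?k + 1)) / 2 :: complex)\<rfloor> = ?k"
    by (simp add: floor_eq_iff)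
  ultimately show "gamma0 a b ! j - gamma0 a b ! (j - 1) = 1"
    and "\<lfloor>Re ((gamma0 a b ! (j - 1) + gamma0 a b ! j) / 2)\<rfloor> = ?k"
    by simp_all
  show "a \<le> ?k" and "?k \<le> b"
    using assms by (auto simp: gamma0_def)
qed

theorem proposition3p11:
  fixes a b :: int and mm ms :: "complex \<Rightarrow> complex"
  assumes "a < 0" and "0 < b"
  shows "\<forall>u v. vinner a b (contour_int a b mm ms (gamma0 a b) u) v
             = vinner a b u (contour_int a b (\<lambda>z. - cnj (mm z)) (\<lambda>z. cnj (ms z)) (gamma0 a b) v)"
proof (intro allI)
  fix u v
  show "vinner a b (contour_int a b mm ms (gamma0 a b) u) v
        = vinner a b u (contour_int a b (\<lambda>z. - cnj (mm z)) (\<lambda>z. cnj (ms z)) (gamma0 a b) v)"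
    unfolding contour_int_def Let_def op_scale_def vinner_sum_left vinner_sum_right
    by (rule sum.cong[OF refl], elim gamma0_edge)
      (simp add: psi_field_def psis_field_def vinner_add_left vinner_diff_right
        vinner_scale_left vinner_scale_right psi_skew_adjoint psis_self_adjoint)
qed

end
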